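(* Let $\mathbf{A}\in\mathcal{PCM}_n$ be a double perturbed pairwise comparison matrix. Then its principal right eigenvector $\mathbf{w}^{EM}$ is efficient.
   Context: A pairwise comparison matrix (PCM) of size $n\times n$ is a matrix $\mathbf{A}=[a_{ij}]$ with $a_{ij}>0$ and $a_{ij}=1/a_{ji}$ for all $i,j$; the set of these is $\mathcal{PCM}_n$. A PCM is consistent if $a_{ik}a_{kj}=a_{ij}$ for all $i,j,k$. A PCM is double perturbed if it differs from a consistent PCM in two elements and their reciprocals, i.e. it can be made consistent by altering two entries (and their reciprocal entries). The principal right eigenvector $\mathbf{w}^{EM}$ is the positive (Perron) eigenvector: $\mathbf{A}\mathbf{w}^{EM}=\lambda_{\max}\mathbf{w}^{EM}$, $\lambda_{\max}$ the Perron eigenvalue. A positive weight vector $\mathbf{w}=(w_1,\dots,w_n)^T$ is efficient if there is no other positive vector $\mathbf{w}'$ with $|a_{ij}-w'_i/w'_j|\le |a_{ij}-w_i/w_j|$ for all $i,j$ and $|a_{k\ell}-w'_k/w'_\ell|< |a_{k\ell}-w_k/w_\ell|$ for some $k,\ell$. *)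

theory Defs
  imports "HOL-Analysis.Analysis"
begin

definition is_PCM :: "real^'n^'n \<Rightarrow> bool" where
  "is_PCM A \<longleftrightarrow> (\<forall>i j. A$i$j > 0 \<and> A$i$j = 1 / A$j$i)"

definition consistent_PCM :: "real^'n^'n \<Rightarrow> bool" where
  "consistent_PCM A \<longleftrightarrow> is_PCM A \<and> (\<forall>i j k. A$i$k * A$k$j = A$i$j)"

definition double_perturbed :: "real^'n^'n \<Rightarrow> bool" where
  "double_perturbed A \<longleftrightarrow> is_PCM A \<and>
     (\<exists>B i j k l. consistent_PCM B \<and> i \<noteq> j \<and> k \<noteq> l \<and> {i, j} \<noteq> {k, l} \<and>
        (\<forall>p q. (p, q) \<notin> {(i, j), (j, i), (k, l), (l, k)} \<longrightarrow> A$p$q = B$p$q))"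

definition cmat :: "real^'n^'n \<Rightarrow> complex^'n^'n" where
  "cmat A = (\<chi> i j. complex_of_real (A$i$j))"

definition perron_eigenvalue :: "real^'n^'n \<Rightarrow> real \<Rightarrow> bool" where
  "perron_eigenvalue A lam \<longleftrightarrow>
     (\<exists>v::complex^'n. v \<noteq> 0 \<and> cmat A *v v = complex_of_real lam *s v) \<and>
     (\<forall>\<mu> (v::complex^'n). v \<noteq> 0 \<and> cmat A *v v = \<mu> *s v \<longrightarrow> cmod \<mu> \<le> lam)"

definition principal_right_eigenvector :: "real^'n^'n \<Rightarrow> real^'n \<Rightarrow> bool" where
  "principal_right_eigenvector A w \<longleftrightarrow>
     (\<forall>i. w$i > 0) \<and> (\<exists>lam. perron_eigenvalue A lam \<and> A *v w = lam *s w)"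

definition efficient :: "real^'n^'n \<Rightarrow> real^'n \<Rightarrow> bool" where
  "efficient A w \<longleftrightarrow> (\<forall>i. w$i > 0) \<and>
     \<not> (\<exists>w'::real^'n. (\<forall>i. w'$i > 0) \<and>
          (\<forall>i j. \<bar>A$i$j - w'$i / w'$j\<bar> \<le> \<bar>A$i$j - w$i / w$j\<bar>) \<and>
          (\<exists>k l. \<bar>A$k$l - w'$k / w'$l\<bar> < \<bar>A$k$l - w$k / w$l\<bar>))"

end

theory Submission
  imports Defs
begin

text \<open>Following Blanquero, Carrizosa and Conde, a positive vector w is efficient for A as soon as
  the digraph with an arc i \<rightarrow> j whenever a_ij \<le> w_i / w_j is strongly connected: for a dominating
  w' the ratio w'_i / w_i cannot decrease along an arc, hence it is constant.
  Conjugating a double perturbed A by the diagonal of its consistent part yields a matrix C that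
  equals 1 outside two reciprocal pairs of entries, with positive eigenvector u. Written as
  \<lambda> u_p = \<Sum>u + excess_p, the eigen-equation shows that an unperturbed pair (p, q) is an arc
  exactly when excess_q \<le> excess_p. A case analysis on how the two perturbed pairs overlap exhibits
  a closed walk through all perturbed indices, and every other index, having excess 0, is entered
  from and left towards that walk.\<close>

definition efficiency_graph :: "('n \<Rightarrow> 'n \<Rightarrow> real) \<Rightarrow> ('n \<Rightarrow> real) \<Rightarrow> ('n \<times> 'n) set" where
  "efficiency_graph M v = {(i, j). M i j \<le> v i / v j}"

lemma efficiency_graph_rescale:
  assumes "\<And>i. s i > 0" and "\<And>i. v i > 0"
  shows "efficiency_graph (\<lambda>i j. M i j * s j / s i) (\<lambda>i. v i / s i) = efficiency_graph M v"
proof -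
  have "M i j * s j / s i \<le> (v i / s i) / (v j / s j) \<longleftrightarrow> M i j \<le> v i / v j" for i j
    using assms[of i] assms[of j] by (simp add: field_simps)
  then show ?thesis by (simp add: efficiency_graph_def)
qed

lemma efficient_if_efficiency_graph_strongly_connected:
  fixes A :: "real^'n^'n" and w :: "real^'n"
  assumes w_pos: "\<And>i. w$i > 0"
    and strong: "(efficiency_graph (\<lambda>i j. A$i$j) (\<lambda>i. w$i))\<^sup>* = UNIV"
  shows "efficient A w"
proof -
  have same_ratios: "w'$i / w'$j = w$i / w$j"
    if w'_pos: "\<And>i. w'$i > 0"
      and dominates: "\<And>i j. \<bar>A$i$j - w'$i / w'$j\<bar> \<le> \<bar>A$i$j - w$i / w$j\<bar>"
    for w' :: "real^'n" and i j
  proof -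
    define r where "r k = w'$k / w$k" for k
    have r_mono: "r p \<le> r q" if "(p, q) \<in> efficiency_graph (\<lambda>i j. A$i$j) (\<lambda>i. w$i)" for p q
    proof -
      have "A$p$q \<le> w$p / w$q" using that by (simp add: efficiency_graph_def)
      with dominates[of p q] have "w'$p / w'$q \<le> w$p / w$q" by linarith
      then show ?thesis
        using w_pos[of p] w_pos[of q] w'_pos[of p] w'_pos[of q]
        by (simp add: r_def divide_simps mult.commute)
    qed
    have "r p \<le> r q" for p q
    proof -
      have "(p, q) \<in> (efficiency_graph (\<lambda>i j. A$i$j) (\<lambda>i. w$i))\<^sup>*" using strong by simp
      then show ?thesis by (induction rule: rtrancl_induct) (auto dest: r_mono)
    qed
    then have "r i = r j" by (meson order_antisym)
    then show ?thesis
      using w_pos[of i] w_pos[of j] w'_pos[of i] w'_pos[of j]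
      by (simp add: r_def divide_simps mult.commute)
  qed
  show ?thesis
    unfolding efficient_def using w_pos same_ratios by (metis less_irrefl)
qed

lemma consistent_PCM_ratio:
  assumes "consistent_PCM B"
  shows "B$p$q = B$p$r / B$q$r"
  using assms unfolding consistent_PCM_def is_PCM_def
  by (metis divide_divide_eq_right div_by_1 mult.commute)

lemma rtrancl_eq_UNIV_through_core:
  assumes core: "V \<times> V \<subseteq> R\<^sup>*" and hi: "hi \<in> V" and lo: "lo \<in> V"
    and outside: "\<And>v. v \<notin> V \<Longrightarrow> (hi, v) \<in> R \<and> (v, lo) \<in> R"
  shows "R\<^sup>* = UNIV"
proof -
  have "(v, lo) \<in> R\<^sup>*" for v using core lo outside by (cases "v \<in> V") auto
  moreover have "(hi, v) \<in> R\<^sup>*" for v using core hi outside by (cases "v \<in> V") auto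
  moreover have "(lo, hi) \<in> R\<^sup>*" using core hi lo by blast
  ultimately have "(p, q) \<in> R\<^sup>*" for p q by (meson rtrancl_trans)
  then show ?thesis by auto
qed

text \<open>C is a double perturbed matrix conjugated by the diagonal of its consistent part, so that
  its unperturbed entries are 1; u is a positive eigenvector of C.\<close>
locale double_perturbation =
  fixes C :: "'n::finite \<Rightarrow> 'n \<Rightarrow> real" and a b c d :: 'n
    and u :: "'n \<Rightarrow> real" and lam :: real
  assumes a_neq_b: "a \<noteq> b" and c_neq_d: "c \<noteq> d" and pairs_neq: "{a, b} \<noteq> {c, d}"
    and C_pos: "\<And>p q. C p q > 0"
    and C_recip: "\<And>p q. C p q = 1 / C q p"
    and C_unperturbed: "\<And>p q. (p, q) \<notin> {(a, b), (b, a), (c, d), (d, c)} \<Longrightarrow> C p q = 1"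
    and u_pos: "\<And>p. u p > 0"
    and eigen: "\<And>p. (\<Sum>q\<in>UNIV. C p q * u q) = lam * u p"
begin

lemma swap_perturbations: "double_perturbation C c d a b u lam"
proof
  show "{c, d} \<noteq> {a, b}" using pairs_neq by (rule not_sym)
  have "{(c, d), (d, c), (a, b), (b, a)} = {(a, b), (b, a), (c, d), (d, c)}" by blast
  then show "C p q = 1" if "(p, q) \<notin> {(c, d), (d, c), (a, b), (b, a)}" for p q
    using that C_unperturbed by simp
qed (fact a_neq_b c_neq_d C_pos C_recip u_pos eigen)+

definition total :: real where
  "total = sum u UNIV"

definition excess :: "'n \<Rightarrow> real" where
  "excess p = (if p = a then (C a b - 1) * u b else 0) + (if p = b then (C b a - 1) * u a else 0)
    + (if p = c then (C c d - 1) * u d else 0) + (if p = d then (C d c - 1) * u c else 0)"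

lemma sum_le_total: "sum u S \<le> total"
  unfolding total_def by (rule sum_mono2) (auto intro: less_imp_le u_pos)

lemma excess_eq_sum: "excess p = (\<Sum>q\<in>UNIV. (C p q - 1) * u q)"
proof -
  have "(C p q - 1) * u q = (if p = a \<and> q = b then (C a b - 1) * u b else 0)
      + (if p = b \<and> q = a then (C b a - 1) * u a else 0)
      + (if p = c \<and> q = d then (C c d - 1) * u d else 0)
      + (if p = d \<and> q = c then (C d c - 1) * u c else 0)" for q
  proof (cases "(p, q) \<in> {(a, b), (b, a), (c, d), (d, c)}")
    case True
    have ab_cd: "(a = c \<and> b = d) = False" "(a = d \<and> b = c) = False" using pairs_neq by auto
    have ab_ba: "(a = b \<and> b = a) = False" "(c = d \<and> d = c) = False" using a_neq_b c_neq_d by auto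
    from True consider "p = a" "q = b" | "p = b" "q = a" | "p = c" "q = d" | "p = d" "q = c"
      by blast
    then show ?thesis
      by cases (simp_all add: ab_cd ab_ba eq_commute[of b a] eq_commute[of c a] eq_commute[of d a]
          eq_commute[of c b] eq_commute[of d b] eq_commute[of d c] conj_commute a_neq_b c_neq_d)
  next
    case False
    then have "C p q = 1" by (rule C_unperturbed)
    moreover from False have "\<not> (p = a \<and> q = b)" "\<not> (p = b \<and> q = a)"
      and "\<not> (p = c \<and> q = d)" "\<not> (p = d \<and> q = c)"
      by blast+
    ultimately show ?thesis by (simp only: if_False) simp
  qed
  moreover have "(\<Sum>q\<in>(UNIV :: 'n set). if P \<and> q = r then K else 0) = (if P then K else 0)"
    for P r and K :: real
    by (cases P) auto
  ultimately show ?thesis by (simp add: sum.distrib excess_def)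
qed

lemma eigen_excess: "lam * u p = total + excess p"
proof -
  have "lam * u p = (\<Sum>q\<in>UNIV. u q + (C p q - 1) * u q)"
    by (simp add: eigen[symmetric] algebra_simps)
  also have "\<dots> = total + excess p"
    by (simp add: sum.distrib total_def excess_eq_sum)
  finally show ?thesis .
qed

lemma lam_pos: "lam > 0"
proof -
  have "0 < (\<Sum>q\<in>UNIV. C a q * u q)"
    by (rule sum_pos) (simp_all add: C_pos u_pos)
  then have "0 < lam * u a" by (simp add: eigen)
  then show ?thesis using u_pos[of a] by (simp add: zero_less_mult_iff)
qed

lemma edge_iff:
  "(p, q) \<in> efficiency_graph C u \<longleftrightarrow> C p q * (total + excess q) \<le> total + excess p"
proof -
  have "(p, q) \<in> efficiency_graph C u \<longleftrightarrow> C p q * u q \<le> u p"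
    using u_pos[of q] by (simp add: efficiency_graph_def pos_le_divide_eq)
  also have "\<dots> \<longleftrightarrow> lam * (C p q * u q) \<le> lam * u p"
    using lam_pos by simp
  also have "\<dots> \<longleftrightarrow> C p q * (total + excess q) \<le> total + excess p"
    by (simp add: eigen_excess[symmetric] mult.left_commute)
  finally show ?thesis .
qed

lemma reverse_edge_iff:
  "(q, p) \<in> efficiency_graph C u \<longleftrightarrow> total + excess p \<le> C p q * (total + excess q)"
  using C_pos[of p q] unfolding edge_iff C_recip[of q p] by (simp add: field_simps)

lemma edge_if_unperturbed:
  assumes "(p, q) \<notin> {(a, b), (b, a), (c, d), (d, c)}" and "excess q \<le> excess p"
  shows "(p, q) \<in> efficiency_graph C u"
  using assms by (simp add: edge_iff C_unperturbed)

lemma excess_outside: "v \<notin> {a, b, c, d} \<Longrightarrow> excess v = 0"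
  by (simp add: excess_def)

lemma edge_to_outside: "v \<notin> {a, b, c, d} \<Longrightarrow> 0 \<le> excess p \<Longrightarrow> (p, v) \<in> efficiency_graph C u"
  by (rule edge_if_unperturbed) (auto simp: excess_outside)

lemma edge_from_outside: "v \<notin> {a, b, c, d} \<Longrightarrow> excess q \<le> 0 \<Longrightarrow> (v, q) \<in> efficiency_graph C u"
  by (rule edge_if_unperturbed) (auto simp: excess_outside)

lemma path_via_outside:
  assumes "v \<notin> {a, b, c, d}" and "0 \<le> excess p" and "excess q \<le> 0"
  shows "(p, q) \<in> (efficiency_graph C u)\<^sup>*"
  using edge_to_outside[OF assms(1,2)] edge_from_outside[OF assms(1,3)] by simp

lemma strongly_connected_if_perturbed_indices_connected:
  assumes "{a, b, c, d} \<times> {a, b, c, d} \<subseteq> (efficiency_graph C u)\<^sup>*"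
    and "hi \<in> {a, b, c, d}" and "0 \<le> excess hi" and "lo \<in> {a, b, c, d}" and "excess lo \<le> 0"
  shows "(efficiency_graph C u)\<^sup>* = UNIV"
  by (rule rtrancl_eq_UNIV_through_core[OF assms(1,2,4)])
    (simp add: edge_to_outside edge_from_outside assms(3,5))

lemma flip_first_perturbation: "double_perturbation C b a c d u lam"
proof
  show "{b, a} \<noteq> {c, d}" using pairs_neq by (simp add: insert_commute)
  have "{(b, a), (a, b), (c, d), (d, c)} = {(a, b), (b, a), (c, d), (d, c)}" by blast
  then show "C p q = 1" if "(p, q) \<notin> {(b, a), (a, b), (c, d), (d, c)}" for p q
    using that C_unperturbed by simp
qed (fact a_neq_b[symmetric] c_neq_d C_pos C_recip u_pos eigen)+

lemma orient_first_perturbation: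
  obtains a' b' where "double_perturbation C a' b' c d u lam" and "1 \<le> C a' b'"
proof (cases "1 \<le> C a b")
  case False
  then have "1 \<le> C b a" using C_pos[of a b] by (simp add: C_recip[of b a] le_divide_eq)
  with flip_first_perturbation that show ?thesis by blast
qed (use double_perturbation_axioms that in blast)

lemma u_nonneg: "0 \<le> u p"
  using u_pos[of p] by simp

lemma excess_if_chained:
  assumes "c = b"
  shows "excess a = (C a b - 1) * u b"
    and "excess b = (C b a - 1) * u a + (C b d - 1) * u d"
    and "excess d = (C d b - 1) * u b"
  using a_neq_b c_neq_d pairs_neq assms unfolding excess_def by auto

lemma excess_if_shared_row:
  assumes "c = a"
  shows "excess a = (C a b - 1) * u b + (C a d - 1) * u d"
    and "excess b = (C b a - 1) * u a"
    and "excess d = (C d a - 1) * u a"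
  using a_neq_b c_neq_d pairs_neq assms unfolding excess_def by auto

lemma excess_if_shared_column:
  assumes "d = b"
  shows "excess a = (C a b - 1) * u b"
    and "excess b = (C b a - 1) * u a + (C b c - 1) * u c"
    and "excess c = (C c b - 1) * u b"
  using a_neq_b c_neq_d pairs_neq assms unfolding excess_def by auto

end

locale oriented_double_perturbation = double_perturbation +
  assumes C_ab_ge_1: "1 \<le> C a b" and C_cd_ge_1: "1 \<le> C c d"
begin

lemma swap_oriented_perturbations: "oriented_double_perturbation C c d a b u lam"
  using swap_perturbations C_ab_ge_1 C_cd_ge_1
  by (simp add: oriented_double_perturbation_def oriented_double_perturbation_axioms_def)

lemma C_ba_le_1: "C b a \<le> 1"
  using C_ab_ge_1 unfolding C_recip[of b a] by simp

lemma C_dc_le_1: "C d c \<le> 1"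
  using C_cd_ge_1 unfolding C_recip[of d c] by simp

lemma back_edge_if_disjoint:
  assumes "a \<notin> {c, d}" and "b \<notin> {c, d}"
  shows "(b, a) \<in> efficiency_graph C u"
proof -
  have excess_a: "excess a = (C a b - 1) * u b" and excess_b: "excess b = (C b a - 1) * u a"
    using assms a_neq_b by (auto simp: excess_def)
  have "u a + u b \<le> total" using sum_le_total[of "{a, b}"] a_neq_b by simp
  then have "0 \<le> (C a b - 1) * (total - u a - u b)" using C_ab_ge_1 by simp
  also have "\<dots> = C a b * (total + excess b) - (total + excess a)"
    using C_pos[of a b] by (simp add: excess_a excess_b C_recip[of b a] field_simps)
  finally show ?thesis by (simp add: reverse_edge_iff)
qed

lemma strongly_connected_if_disjoint:
  assumes "a \<notin> {c, d}" and "b \<notin> {c, d}"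
  shows "(efficiency_graph C u)\<^sup>* = UNIV"
proof -
  have excess_a: "excess a = (C a b - 1) * u b" and excess_b: "excess b = (C b a - 1) * u a"
    and excess_c: "excess c = (C c d - 1) * u d" and excess_d: "excess d = (C d c - 1) * u c"
    using assms a_neq_b c_neq_d by (auto simp: excess_def)
  have "0 \<le> excess a" "excess b \<le> 0" "excess d \<le> 0" "0 \<le> excess c"
    using C_ab_ge_1 C_ba_le_1 C_cd_ge_1 C_dc_le_1 u_nonneg
    by (simp_all add: excess_a excess_b excess_c excess_d mult_nonpos_nonneg)
  moreover have "(a, d) \<in> efficiency_graph C u" "(c, b) \<in> efficiency_graph C u"
    using assms a_neq_b c_neq_d \<open>0 \<le> excess a\<close> \<open>excess d \<le> 0\<close> \<open>excess b \<le> 0\<close> \<open>0 \<le> excess c\<close>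
    by (auto intro!: edge_if_unperturbed)
  moreover have "(b, a) \<in> efficiency_graph C u"
    using assms by (rule back_edge_if_disjoint)
  moreover have "(d, c) \<in> efficiency_graph C u"
    using oriented_double_perturbation.back_edge_if_disjoint[OF swap_oriented_perturbations] assms
    by blast
  ultimately show ?thesis
    by (intro strongly_connected_if_perturbed_indices_connected[where hi = a and lo = b])
      (simp_all, blast intro: rtrancl_trans r_into_rtrancl)
qed

lemma strongly_connected_if_chained:
  assumes c_eq: "c = b"
  shows "(efficiency_graph C u)\<^sup>* = UNIV"
proof -
  have a_neq_d: "a \<noteq> d" and b_neq_d: "b \<noteq> d" using pairs_neq c_neq_d c_eq by auto
  note excess = excess_if_chained[OF c_eq]
  have C_bd_ge_1: "1 \<le> C b d" and C_db_le_1: "C d b \<le> 1"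
    using C_cd_ge_1 C_dc_le_1 by (simp_all add: c_eq)
  have total_ge: "u a + u b + u d \<le> total"
    using sum_le_total[of "{a, b, d}"] a_neq_b a_neq_d b_neq_d by simp
  have "0 \<le> excess a" "excess d \<le> 0"
    using C_ab_ge_1 C_db_le_1 u_nonneg by (simp_all add: excess mult_nonpos_nonneg)
  moreover have "(a, d) \<in> efficiency_graph C u"
    using a_neq_b a_neq_d b_neq_d c_eq \<open>0 \<le> excess a\<close> \<open>excess d \<le> 0\<close>
    by (intro edge_if_unperturbed) auto
  moreover have "(b, a) \<in> efficiency_graph C u"
  proof -
    have "0 \<le> (C a b - 1) * (total - u a - u b) + C a b * (C b d - 1) * u d"
      using C_ab_ge_1 C_bd_ge_1 u_nonneg[of a] u_nonneg[of d] total_ge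
      by (intro add_nonneg_nonneg mult_nonneg_nonneg) auto
    also have "\<dots> = C a b * (total + excess b) - (total + excess a)"
      using C_pos[of a b] by (simp add: excess C_recip[of b a] field_simps)
    finally show ?thesis by (simp add: reverse_edge_iff)
  qed
  moreover have "(d, b) \<in> efficiency_graph C u"
  proof -
    have "0 \<le> (C b d - 1) * (total - u b - u d) + (1 - C b a) * u a"
      using C_bd_ge_1 C_ba_le_1 u_nonneg[of a] u_nonneg[of d] total_ge
      by (intro add_nonneg_nonneg mult_nonneg_nonneg) auto
    also have "\<dots> = C b d * (total + excess d) - (total + excess b)"
      using C_pos[of b d] by (simp add: excess C_recip[of d b] field_simps)
    finally show ?thesis by (simp add: reverse_edge_iff)
  qed
  ultimately show ?thesis
    by (intro strongly_connected_if_perturbed_indices_connected[where hi = a and lo = d])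
      (simp_all add: c_eq, blast intro: rtrancl_trans r_into_rtrancl)
qed

lemma closing_path_if_shared_row:
  assumes c_eq: "c = a" and C_ad_le: "C a d \<le> C a b"
  shows "(a, d) \<in> (efficiency_graph C u)\<^sup>*"
proof (cases "UNIV = {a, b, d}")
  case True
  note excess = excess_if_shared_row[OF c_eq]
  have "a \<noteq> d" "b \<noteq> d" using pairs_neq c_neq_d c_eq by auto
  then have "total = u a + u b + u d"
    unfolding total_def True using a_neq_b by simp
  have "0 \<le> (C a b - C a d) * u b" using C_ad_le u_nonneg[of b] by simp
  also have "\<dots> = total + excess a - C a d * (total + excess d)"
    using C_pos[of a d] \<open>total = u a + u b + u d\<close>
    by (simp add: excess C_recip[of d a] field_simps)
  finally show ?thesis by (simp add: edge_iff r_into_rtrancl)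
next
  case False
  then obtain v where "v \<notin> {a, b, c, d}" using c_eq by blast
  moreover have "1 \<le> C a d" and "C d a \<le> 1" using C_cd_ge_1 C_dc_le_1 c_eq by simp_all
  then have "0 \<le> excess a" and "excess d \<le> 0"
    using C_ab_ge_1 u_nonneg by (simp_all add: excess_if_shared_row[OF c_eq] mult_nonpos_nonneg)
  ultimately show ?thesis by (rule path_via_outside)
qed

lemma strongly_connected_if_shared_row:
  assumes c_eq: "c = a" and C_ad_le: "C a d \<le> C a b"
  shows "(efficiency_graph C u)\<^sup>* = UNIV"
proof -
  have a_neq_d: "a \<noteq> d" and b_neq_d: "b \<noteq> d" using pairs_neq c_neq_d c_eq by auto
  note excess = excess_if_shared_row[OF c_eq]
  have C_ad_ge_1: "1 \<le> C a d" and C_da_le_1: "C d a \<le> 1"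
    using C_cd_ge_1 C_dc_le_1 by (simp_all add: c_eq)
  have "0 \<le> excess a" "excess b \<le> 0"
    using C_ab_ge_1 C_ad_ge_1 C_ba_le_1 u_nonneg by (simp_all add: excess mult_nonpos_nonneg)
  moreover have "(d, b) \<in> efficiency_graph C u"
  proof (rule edge_if_unperturbed)
    show "(d, b) \<notin> {(a, b), (b, a), (c, d), (d, c)}" using a_neq_b a_neq_d b_neq_d c_eq by auto
    have "C b a \<le> C d a"
      using C_ad_ge_1 C_ad_le by (simp add: C_recip[of b a] C_recip[of d a] frac_le)
    then show "excess b \<le> excess d" using u_nonneg[of a] by (simp add: excess mult_right_mono)
  qed
  moreover have "(b, a) \<in> efficiency_graph C u"
  proof -
    have "u a + u b + u d \<le> total"
      using sum_le_total[of "{a, b, d}"] a_neq_b a_neq_d b_neq_d by simp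
    then have "0 \<le> (C a b - 1) * (total - u a - u b - u d) + (C a b - C a d) * u d"
      using C_ab_ge_1 C_ad_le u_nonneg[of d] by (intro add_nonneg_nonneg mult_nonneg_nonneg) auto
    also have "\<dots> = C a b * (total + excess b) - (total + excess a)"
      using C_pos[of a b] by (simp add: excess C_recip[of b a] field_simps)
    finally show ?thesis by (simp add: reverse_edge_iff)
  qed
  moreover have "(a, d) \<in> (efficiency_graph C u)\<^sup>*"
    using c_eq C_ad_le by (rule closing_path_if_shared_row)
  ultimately show ?thesis
    by (intro strongly_connected_if_perturbed_indices_connected[where hi = a and lo = b])
      (simp_all add: c_eq, blast intro: rtrancl_trans r_into_rtrancl)
qed

lemma closing_path_if_shared_column:
  assumes d_eq: "d = b" and C_cb_le: "C c b \<le> C a b"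
  shows "(c, b) \<in> (efficiency_graph C u)\<^sup>*"
proof (cases "UNIV = {a, b, c}")
  case True
  note excess = excess_if_shared_column[OF d_eq]
  have "a \<noteq> c" "b \<noteq> c" using pairs_neq c_neq_d d_eq by auto
  then have "total = u a + u b + u c"
    unfolding total_def True using a_neq_b by simp
  have "C c b * C b a \<le> 1"
    using C_cb_le C_pos[of a b] by (simp add: C_recip[of b a])
  then have "0 \<le> (1 - C c b * C b a) * u a" using u_nonneg[of a] by simp
  also have "\<dots> = total + excess c - C c b * (total + excess b)"
    using C_pos[of c b] \<open>total = u a + u b + u c\<close>
    by (simp add: excess C_recip[of b c] field_simps)
  finally show ?thesis by (simp add: edge_iff r_into_rtrancl)
next
  case False
  then obtain v where "v \<notin> {a, b, c, d}" using d_eq by blast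
  moreover have "1 \<le> C c b" and "C b c \<le> 1" using C_cd_ge_1 C_dc_le_1 d_eq by simp_all
  then have "0 \<le> excess c" and "excess b \<le> 0"
    using C_ba_le_1 u_nonneg
    by (simp_all add: excess_if_shared_column[OF d_eq] add_nonpos_nonpos mult_nonpos_nonneg)
  ultimately show ?thesis by (rule path_via_outside)
qed

lemma strongly_connected_if_shared_column:
  assumes d_eq: "d = b" and C_cb_le: "C c b \<le> C a b"
  shows "(efficiency_graph C u)\<^sup>* = UNIV"
proof -
  have a_neq_c: "a \<noteq> c" and b_neq_c: "b \<noteq> c" using pairs_neq c_neq_d d_eq by auto
  note excess = excess_if_shared_column[OF d_eq]
  have C_cb_ge_1: "1 \<le> C c b" and C_bc_le_1: "C b c \<le> 1"
    using C_cd_ge_1 C_dc_le_1 by (simp_all add: d_eq)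
  have "0 \<le> excess a" "excess b \<le> 0"
    using C_ab_ge_1 C_ba_le_1 C_bc_le_1 u_nonneg
    by (simp_all add: excess add_nonpos_nonpos mult_nonpos_nonneg)
  moreover have "(a, c) \<in> efficiency_graph C u"
  proof (rule edge_if_unperturbed)
    show "(a, c) \<notin> {(a, b), (b, a), (c, d), (d, c)}" using a_neq_b a_neq_c b_neq_c d_eq by auto
    show "excess c \<le> excess a"
      using C_cb_le u_nonneg[of b] by (simp add: excess mult_right_mono)
  qed
  moreover have "(b, a) \<in> efficiency_graph C u"
  proof -
    have "u a + u b + u c \<le> total"
      using sum_le_total[of "{a, b, c}"] a_neq_b a_neq_c b_neq_c by simp
    moreover have "1 \<le> C a b * C b c"
      using C_cb_le C_pos[of c b] by (simp add: C_recip[of b c])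
    ultimately have "0 \<le> (C a b - 1) * (total - u a - u b - u c) + (C a b * C b c - 1) * u c"
      using C_ab_ge_1 u_nonneg[of c] by (intro add_nonneg_nonneg mult_nonneg_nonneg) auto
    also have "\<dots> = C a b * (total + excess b) - (total + excess a)"
      using C_pos[of a b] by (simp add: excess C_recip[of b a] field_simps)
    finally show ?thesis by (simp add: reverse_edge_iff)
  qed
  moreover have "(c, b) \<in> (efficiency_graph C u)\<^sup>*"
    using d_eq C_cb_le by (rule closing_path_if_shared_column)
  ultimately show ?thesis
    by (intro strongly_connected_if_perturbed_indices_connected[where hi = a and lo = b])
      (simp_all add: d_eq, blast intro: rtrancl_trans r_into_rtrancl)
qed

lemma strongly_connected: "(efficiency_graph C u)\<^sup>* = UNIV"
proof -
  interpret swapped: oriented_double_perturbation C c d a b u lam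
    by (rule swap_oriented_perturbations)
  consider "a \<notin> {c, d}" "b \<notin> {c, d}" | "c = b" | "a = d" | "c = a" | "d = b"
    by blast
  then show ?thesis
  proof cases
    case 1
    then show ?thesis by (rule strongly_connected_if_disjoint)
  next
    case 2
    then show ?thesis by (rule strongly_connected_if_chained)
  next
    case 3
    then show ?thesis by (rule swapped.strongly_connected_if_chained)
  next
    case 4
    then show ?thesis
      using strongly_connected_if_shared_row swapped.strongly_connected_if_shared_row
      by (cases "C c d \<le> C a b") auto
  next
    case 5
    then show ?thesis
      using strongly_connected_if_shared_column swapped.strongly_connected_if_shared_column
      by (cases "C c d \<le> C a b") auto
  qed
qed

end

context double_perturbation
begin

lemma strongly_connected: "(efficiency_graph C u)\<^sup>* = UNIV"
proof -
  obtain a' b' where first: "double_perturbation C a' b' c d u lam" and "1 \<le> C a' b'"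
    by (rule orient_first_perturbation)
  obtain c' d' where "double_perturbation C c' d' a' b' u lam" and "1 \<le> C c' d'"
    by (rule double_perturbation.orient_first_perturbation
        [OF double_perturbation.swap_perturbations[OF first]])
  then have "oriented_double_perturbation C a' b' c' d' u lam"
    using \<open>1 \<le> C a' b'\<close> double_perturbation.swap_perturbations
    by (simp add: oriented_double_perturbation_def oriented_double_perturbation_axioms_def)
  then show ?thesis by (rule oriented_double_perturbation.strongly_connected)
qed

end

lemma double_perturbed_efficiency_graph_strongly_connected:
  fixes A :: "real^'n^'n" and w :: "real^'n"
  assumes "double_perturbed A" and w_pos: "\<And>i. w$i > 0" and eigen: "A *v w = lam *s w"
  shows "(efficiency_graph (\<lambda>i j. A$i$j) (\<lambda>i. w$i))\<^sup>* = UNIV"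
proof -
  obtain B i j k l where "is_PCM A" and "consistent_PCM B" and "i \<noteq> j" "k \<noteq> l" "{i, j} \<noteq> {k, l}"
    and A_eq_B: "\<And>p q. (p, q) \<notin> {(i, j), (j, i), (k, l), (l, k)} \<Longrightarrow> A$p$q = B$p$q"
    using assms(1) unfolding double_perturbed_def by blast
  define s where "s p = B$p$i" for p
  have s_pos: "s p > 0" for p
    using \<open>consistent_PCM B\<close> unfolding s_def consistent_PCM_def is_PCM_def by blast
  have A_pos: "A$p$q > 0" and A_recip: "A$p$q = 1 / A$q$p" for p q
    using \<open>is_PCM A\<close> unfolding is_PCM_def by blast+
  interpret double_perturbation "\<lambda>p q. A$p$q * s q / s p" i j k l "\<lambda>p. w$p / s p" lam
  proof
    show "A$p$q * s q / s p > 0" for p q using A_pos s_pos by simp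
    show "A$p$q * s q / s p = 1 / (A$q$p * s p / s q)" for p q
      using A_recip[of p q] by simp
    show "A$p$q * s q / s p = 1" if "(p, q) \<notin> {(i, j), (j, i), (k, l), (l, k)}" for p q
      using A_eq_B[OF that] consistent_PCM_ratio[OF \<open>consistent_PCM B\<close>, of p q i]
        s_pos[of p] s_pos[of q]
      by (simp add: s_def)
    show "w$p / s p > 0" for p using w_pos s_pos by simp
    show "(\<Sum>q\<in>UNIV. A$p$q * s q / s p * (w$q / s q)) = lam * (w$p / s p)" for p
    proof -
      have "(\<Sum>q\<in>UNIV. A$p$q * s q / s p * (w$q / s q)) = (\<Sum>q\<in>UNIV. A$p$q * w$q) / s p"
        using s_pos by (simp add: sum_divide_distrib less_imp_neq[symmetric])
      also have "\<dots> = lam * (w$p / s p)"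
        using eigen by (simp add: matrix_vector_mult_def vec_eq_iff)
      finally show ?thesis .
    qed
  qed fact+
  have "efficiency_graph (\<lambda>p q. A$p$q * s q / s p) (\<lambda>p. w$p / s p)
      = efficiency_graph (\<lambda>i j. A$i$j) (\<lambda>i. w$i)"
    by (rule efficiency_graph_rescale) (simp_all add: s_pos w_pos)
  with strongly_connected show ?thesis by simp
qed

theorem theorem6:
  fixes A :: "real^'n^'n" and w :: "real^'n"
  assumes "double_perturbed A"
    and "principal_right_eigenvector A w"
  shows "efficient A w"
proof -
  from assms(2) obtain lam where w_pos: "\<And>i. w$i > 0" and "A *v w = lam *s w"
    unfolding principal_right_eigenvector_def by blast
  with assms(1) show ?thesis
    by (intro efficient_if_efficiency_graph_strongly_connected
        double_perturbed_efficiency_graph_strongly_connected)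
qed

end
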